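(* Let $A\in M_n(\mathbb{C})$ with $\|A\|_2=\sigma$, let $r_i=\sum_{k=1}^nA_{ik}$ be its row sums and $c_j=\sum_{k=1}^nA_{kj}$ its column sums. Then: (1) $|r_1|=\cdots=|r_n|=\sigma$ if and only if $A=\sigma W_\theta D$, where $W_\theta=\operatorname{diag}(e^{i\theta_1},\dots,e^{i\theta_n})$ with $r_k=\sigma e^{i\theta_k}$ for each $k$, and $D$ is a $1$-generalized doubly stochastic matrix with $\|D\|_2=1$. (2) $|c_1|=\cdots=|c_n|=\sigma$ if and only if $A=\sigma DW_\gamma$, where $W_\gamma=\operatorname{diag}(e^{i\gamma_1},\dots,e^{i\gamma_n})$ with $c_k=\sigma e^{i\gamma_k}$ for each $k$, and $D$ is a $1$-generalized doubly stochastic matrix with $\|D\|_2=1$.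
   Context: $\|M\|_2$ denotes the spectral norm. A $1$-generalized doubly stochastic matrix is a square complex matrix all of whose row sums and column sums equal $1$. *)

theory Defs
  imports "HOL-Analysis.Analysis"
begin

definition spectral_norm :: "complex^'n^'n \<Rightarrow> real" where
  "spectral_norm A = onorm (\<lambda>x::complex^'n. A *v x)"

definition row_sum :: "complex^'n^'n \<Rightarrow> 'n \<Rightarrow> complex" where
  "row_sum A i = (\<Sum>k\<in>UNIV. A $ i $ k)"

definition col_sum :: "complex^'n^'n \<Rightarrow> 'n \<Rightarrow> complex" where
  "col_sum A j = (\<Sum>k\<in>UNIV. A $ k $ j)"

definition gen_doubly_stochastic :: "complex^'n^'n \<Rightarrow> bool" where
  "gen_doubly_stochastic D \<longleftrightarrow> (\<forall>i. row_sum D i = 1) \<and> (\<forall>j. col_sum D j = 1)"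

definition diag_cis :: "('n \<Rightarrow> real) \<Rightarrow> complex^'n^'n" where
  "diag_cis \<theta> = (\<chi> i j. if i = j then cis (\<theta> i) else 0)"

end

theory Submission
  imports Defs
begin

text \<open>
  Write the row sums as \<open>r k = \<sigma> cis (\<theta> k)\<close>. For \<open>\<sigma> > 0\<close> the matrix
  \<open>D = \<sigma>\<^sup>-\<^sup>1 W\<^sub>\<theta>\<^sup>* A\<close> has spectral norm 1 (as \<open>W\<^sub>\<theta>\<close> is unitary) and unit row sums, i.e. it
  fixes the all-ones vector. A contraction fixing a vector \<open>v\<close> has an adjoint fixing \<open>v\<close> too:
  \<open>\<langle>D\<^sup>* v, v\<rangle> = \<langle>v, D v\<rangle> = \<parallel>v\<parallel>\<^sup>2\<close> gives \<open>\<parallel>D\<^sup>* v - v\<parallel>\<^sup>2 = \<parallel>D\<^sup>* v\<parallel>\<^sup>2 - \<parallel>v\<parallel>\<^sup>2 \<le> 0\<close>.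
  Applied to the all-ones vector, whose image under \<open>D\<^sup>*\<close> is the vector of conjugated
  column sums, this makes \<open>D\<close> doubly stochastic. Columns are symmetric, with
  \<open>D = \<sigma>\<^sup>-\<^sup>1 A W\<^sub>\<gamma>\<^sup>*\<close>.
\<close>

lemma norm_adjoint_le:
  fixes f :: "'a::real_inner \<Rightarrow> 'b::real_inner"
  assumes adj: "\<And>x y. inner (f x) y = inner x (g y)"
    and bound: "\<And>x. norm (f x) \<le> c * norm x" and "0 \<le> c"
  shows "norm (g y) \<le> c * norm y"
proof -
  have "norm (g y) * norm (g y) = inner (f (g y)) y"
    by (simp add: adj power2_norm_eq_inner flip: power2_eq_square)
  also have "\<dots> \<le> norm (f (g y)) * norm y"
    by (rule norm_cauchy_schwarz)
  also have "\<dots> \<le> c * norm (g y) * norm y"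
    by (rule mult_right_mono[OF bound norm_ge_zero])
  finally show ?thesis
    using \<open>0 \<le> c\<close> by (cases "g y = 0") (auto simp: mult_ac)
qed

lemma adjoint_fixes_fixed_point:
  fixes f :: "'a::real_inner \<Rightarrow> 'a"
  assumes adj: "\<And>x y. inner (f x) y = inner x (g y)"
    and contr: "norm (g v) \<le> norm v" and fixed: "f v = v"
  shows "g v = v"
proof -
  have "inner (g v) v = inner v v"
    using adj[of v v] fixed by (simp add: inner_commute)
  then have "(norm (g v - v))\<^sup>2 = (norm (g v))\<^sup>2 - (norm v)\<^sup>2"
    by (simp add: power2_norm_eq_inner inner_diff_left inner_diff_right inner_commute)
  also have "\<dots> \<le> 0"
    using contr by (simp add: power_mono)
  finally show ?thesis
    by simp
qed

definition conj_transpose :: "complex^'n^'m \<Rightarrow> complex^'m^'n" where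
  "conj_transpose A = (\<chi> i j. cnj (A $ j $ i))"

lemma conj_transpose_conj_transpose [simp]: "conj_transpose (conj_transpose A) = A"
  by (simp add: conj_transpose_def vec_eq_iff)

lemma inner_matrix_vector_conj_transpose:
  fixes A :: "complex^'n^'m"
  shows "inner (A *v x) y = inner x (conj_transpose A *v y)"
proof -
  have inner_eq: "inner u v = Re (u * cnj v)" for u v :: complex
    by (simp add: inner_complex_def)
  have "inner (A *v x) y = (\<Sum>i\<in>UNIV. \<Sum>j\<in>UNIV. Re (A $ i $ j * x $ j * cnj (y $ i)))"
    by (simp add: inner_vec_def matrix_vector_mult_def inner_eq sum_distrib_right)
  also have "\<dots> = (\<Sum>j\<in>UNIV. \<Sum>i\<in>UNIV. Re (A $ i $ j * x $ j * cnj (y $ i)))"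
    by (rule sum.swap)
  also have "\<dots> = inner x (conj_transpose A *v y)"
    by (simp add: inner_vec_def matrix_vector_mult_def inner_eq conj_transpose_def
        sum_distrib_left mult_ac)
  finally show ?thesis .
qed

lemma norm_matrix_vector_le_spectral_norm:
  fixes A :: "complex^'n^'n"
  shows "norm (A *v x) \<le> spectral_norm A * norm x"
  unfolding spectral_norm_def by (rule onorm) simp

lemma spectral_norm_le:
  fixes A :: "complex^'n^'n"
  assumes "\<And>x. norm (A *v x) \<le> c * norm x"
  shows "spectral_norm A \<le> c"
  unfolding spectral_norm_def by (rule onorm_le) (fact assms)

lemma spectral_norm_nonneg: "0 \<le> spectral_norm (A :: complex^'n^'n)"
  unfolding spectral_norm_def by (rule onorm_pos_le) simp

lemma spectral_norm_eq_0_iff: "spectral_norm (A :: complex^'n^'n) = 0 \<longleftrightarrow> A = 0"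
proof -
  have "bounded_linear (\<lambda>x::complex^'n. A *v x)"
    by simp
  then show ?thesis
    unfolding spectral_norm_def by (metis onorm_eq_0 matrix_eq matrix_vector_mult_0)
qed

lemma spectral_norm_mat_1: "spectral_norm (mat 1 :: complex^'n^'n) = 1"
  by (simp add: spectral_norm_def onorm_id)

lemma spectral_norm_scaleR:
  fixes A :: "complex^'n^'n"
  shows "spectral_norm (c *\<^sub>R A) = \<bar>c\<bar> * spectral_norm A"
proof -
  have "(\<lambda>x. (c *\<^sub>R A) *v x) = (\<lambda>x. c *\<^sub>R (A *v x))"
    by (simp add: fun_eq_iff vec_eq_iff matrix_vector_mult_def scaleR_sum_right)
  then show ?thesis
    unfolding spectral_norm_def by (simp add: onorm_scaleR)
qed

lemma spectral_norm_mult_le: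
  fixes A B :: "complex^'n^'n"
  shows "spectral_norm (A ** B) \<le> spectral_norm A * spectral_norm B"
proof -
  have "(\<lambda>x. (A ** B) *v x) = (\<lambda>x. A *v x) \<circ> (\<lambda>x. B *v x)"
    by (simp add: o_def matrix_vector_mul_assoc)
  then show ?thesis
    unfolding spectral_norm_def by (simp add: onorm_compose)
qed

lemma spectral_norm_conj_transpose:
  fixes A :: "complex^'n^'n"
  shows "spectral_norm (conj_transpose A) = spectral_norm A"
proof -
  have le: "spectral_norm (conj_transpose M) \<le> spectral_norm M" for M :: "complex^'n^'n"
    by (intro spectral_norm_le norm_adjoint_le[OF inner_matrix_vector_conj_transpose
          norm_matrix_vector_le_spectral_norm spectral_norm_nonneg])
  show ?thesis
    using le[of A] le[of "conj_transpose A"] by simp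
qed

lemma diag_cis_matrix_mult_nth:
  "(diag_cis \<theta> ** A) $ i $ j = cis (\<theta> i) * A $ i $ j"
  by (simp add: diag_cis_def matrix_matrix_mult_def mult_delta_left mult_delta_right)

lemma matrix_mult_diag_cis_nth:
  "(A ** diag_cis \<theta>) $ i $ j = A $ i $ j * cis (\<theta> j)"
  by (simp add: diag_cis_def matrix_matrix_mult_def mult_delta_left mult_delta_right)

lemma diag_cis_mult_diag_cis_uminus: "diag_cis \<theta> ** diag_cis (\<lambda>i. - \<theta> i) = mat 1"
  by (simp add: vec_eq_iff diag_cis_matrix_mult_nth) (simp add: diag_cis_def mat_def cis_mult)

lemma diag_cis_uminus_mult_diag_cis: "diag_cis (\<lambda>i. - \<theta> i) ** diag_cis \<theta> = mat 1"
  using diag_cis_mult_diag_cis_uminus[of "\<lambda>i. - \<theta> i"] by simp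

lemma diag_cis_mult_vector_nth: "(diag_cis \<theta> *v x) $ i = cis (\<theta> i) * x $ i"
  by (simp add: diag_cis_def matrix_vector_mult_def mult_delta_left)

lemma norm_diag_cis_mult_vector: "norm (diag_cis \<theta> *v x) = norm x"
  by (simp add: norm_vec_def diag_cis_mult_vector_nth norm_mult)

lemma spectral_norm_diag_cis_le: "spectral_norm (diag_cis \<theta>) \<le> 1"
  by (rule spectral_norm_le) (simp add: norm_diag_cis_mult_vector)

lemma spectral_norm_diag_cis_mult [simp]: "spectral_norm (diag_cis \<theta> ** A) = spectral_norm A"
proof -
  have le: "spectral_norm (diag_cis \<phi> ** M) \<le> spectral_norm M" for \<phi> and M :: "complex^'n^'n"
    using spectral_norm_mult_le[of "diag_cis \<phi>" M]
      mult_right_mono[OF spectral_norm_diag_cis_le[of \<phi>] spectral_norm_nonneg[of M]]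
    by simp
  have "A = diag_cis (\<lambda>i. - \<theta> i) ** (diag_cis \<theta> ** A)"
    by (simp add: matrix_mul_assoc diag_cis_uminus_mult_diag_cis)
  then have "spectral_norm A \<le> spectral_norm (diag_cis \<theta> ** A)"
    by (metis le)
  with le[of \<theta> A] show ?thesis
    by linarith
qed

lemma spectral_norm_mult_diag_cis [simp]: "spectral_norm (A ** diag_cis \<theta>) = spectral_norm A"
proof -
  have le: "spectral_norm (M ** diag_cis \<phi>) \<le> spectral_norm M" for \<phi> and M :: "complex^'n^'n"
    using spectral_norm_mult_le[of M "diag_cis \<phi>"]
      mult_left_mono[OF spectral_norm_diag_cis_le[of \<phi>] spectral_norm_nonneg[of M]]
    by simp
  have "A = (A ** diag_cis \<theta>) ** diag_cis (\<lambda>i. - \<theta> i)"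
    by (simp flip: matrix_mul_assoc add: diag_cis_mult_diag_cis_uminus)
  then have "spectral_norm A \<le> spectral_norm (A ** diag_cis \<theta>)"
    by (metis le)
  with le[of A \<theta>] show ?thesis
    by linarith
qed

lemma row_sum_scaleR: "row_sum (c *\<^sub>R A) i = c *\<^sub>R row_sum A i"
  by (simp add: row_sum_def scaleR_sum_right)

lemma col_sum_scaleR: "col_sum (c *\<^sub>R A) j = c *\<^sub>R col_sum A j"
  by (simp add: col_sum_def scaleR_sum_right)

lemma row_sum_diag_cis_mult: "row_sum (diag_cis \<theta> ** A) i = cis (\<theta> i) * row_sum A i"
  by (simp add: row_sum_def diag_cis_matrix_mult_nth sum_distrib_left)

lemma col_sum_mult_diag_cis: "col_sum (A ** diag_cis \<theta>) j = col_sum A j * cis (\<theta> j)"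
  by (simp add: col_sum_def matrix_mult_diag_cis_nth sum_distrib_right)

lemma matrix_vector_mult_one_nth: "(A *v 1) $ i = row_sum A i"
  by (simp add: matrix_vector_mult_def row_sum_def)

lemma conj_transpose_mult_one_nth: "(conj_transpose A *v 1) $ j = cnj (col_sum A j)"
  by (simp add: matrix_vector_mult_def col_sum_def conj_transpose_def)

lemma row_sums_eq_1_iff: "(\<forall>i. row_sum A i = 1) \<longleftrightarrow> A *v 1 = 1"
  by (simp add: vec_eq_iff matrix_vector_mult_one_nth)

lemma col_sums_eq_1_iff: "(\<forall>j. col_sum A j = 1) \<longleftrightarrow> conj_transpose A *v 1 = 1"
  by (simp add: vec_eq_iff conj_transpose_mult_one_nth)

lemma gen_doubly_stochastic_mat_1: "gen_doubly_stochastic (mat 1 :: complex^'n^'n)"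
  by (simp add: gen_doubly_stochastic_def row_sum_def col_sum_def mat_def)

lemma fixed_point_iff_conj_transpose_fixed_point:
  fixes A :: "complex^'n^'n"
  assumes "spectral_norm A \<le> 1"
  shows "A *v v = v \<longleftrightarrow> conj_transpose A *v v = v"
proof -
  have "norm (A *v v) \<le> norm v"
    using norm_matrix_vector_le_spectral_norm[of A v] mult_right_mono[OF assms norm_ge_zero, of v]
    by simp
  moreover have "norm (conj_transpose A *v v) \<le> norm v"
    using norm_matrix_vector_le_spectral_norm[of "conj_transpose A" v]
      mult_right_mono[OF assms norm_ge_zero, of v]
    by (simp add: spectral_norm_conj_transpose)
  moreover have "inner (conj_transpose A *v x) y = inner x (A *v y)" for x y
    using inner_matrix_vector_conj_transpose[of "conj_transpose A"] by simp
  ultimately show ?thesis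
    using adjoint_fixes_fixed_point[of "\<lambda>x. A *v x" "\<lambda>x. conj_transpose A *v x" v]
      adjoint_fixes_fixed_point[of "\<lambda>x. conj_transpose A *v x" "\<lambda>x. A *v x" v]
      inner_matrix_vector_conj_transpose[of A]
    by blast
qed

lemma gen_doubly_stochastic_iff_row_sums:
  assumes "spectral_norm (D :: complex^'n^'n) \<le> 1"
  shows "gen_doubly_stochastic D \<longleftrightarrow> (\<forall>i. row_sum D i = 1)"
  using fixed_point_iff_conj_transpose_fixed_point[OF assms]
  by (simp add: gen_doubly_stochastic_def row_sums_eq_1_iff col_sums_eq_1_iff)

lemma gen_doubly_stochastic_iff_col_sums:
  assumes "spectral_norm (D :: complex^'n^'n) \<le> 1"
  shows "gen_doubly_stochastic D \<longleftrightarrow> (\<forall>j. col_sum D j = 1)"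
  using fixed_point_iff_conj_transpose_fixed_point[OF assms]
  by (simp add: gen_doubly_stochastic_def row_sums_eq_1_iff col_sums_eq_1_iff)

lemma diag_cis_doubly_stochastic_factorization:
  fixes A :: "complex^'n^'n"
  assumes norm_A: "spectral_norm A = \<sigma>" and row_sums: "\<And>k. cmod (row_sum A k) = \<sigma>"
  shows "\<exists>\<theta> D. (\<forall>k. row_sum A k = complex_of_real \<sigma> * cis (\<theta> k)) \<and>
           gen_doubly_stochastic D \<and> spectral_norm D = 1 \<and> A = \<sigma> *\<^sub>R (diag_cis \<theta> ** D)"
proof (cases "\<sigma> = 0")
  case True
  then have "A = 0"
    using norm_A spectral_norm_eq_0_iff by blast
  then show ?thesis
    using True gen_doubly_stochastic_mat_1 spectral_norm_mat_1 by (auto simp: row_sum_def)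
next
  case False
  then have "0 < \<sigma>"
    using norm_A spectral_norm_nonneg[of A] by simp
  define \<theta> where "\<theta> k = Arg (row_sum A k)" for k
  have polar: "row_sum A k = complex_of_real \<sigma> * cis (\<theta> k)" for k
    using rcis_cmod_Arg[of "row_sum A k"] by (simp add: \<theta>_def rcis_def row_sums)
  define D where "D = (1 / \<sigma>) *\<^sub>R (diag_cis (\<lambda>i. - \<theta> i) ** A)"
  have "A = \<sigma> *\<^sub>R (diag_cis \<theta> ** D)"
    using \<open>0 < \<sigma>\<close>
    by (simp add: D_def matrix_scalar_ac matrix_mul_assoc diag_cis_mult_diag_cis_uminus
        flip: scalar_matrix_assoc)
  moreover have "spectral_norm D = 1"
    using \<open>0 < \<sigma>\<close> by (simp add: D_def spectral_norm_scaleR norm_A)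
  moreover have "row_sum D k = 1" for k
  proof -
    have "row_sum D k = (1 / \<sigma>) *\<^sub>R (cis (- \<theta> k) * (\<sigma> * cis (\<theta> k)))"
      by (simp add: D_def row_sum_scaleR row_sum_diag_cis_mult polar)
    also have "\<dots> = 1"
      using \<open>0 < \<sigma>\<close> by (simp add: scaleR_conv_of_real mult.left_commute[of "cis _"] cis_mult)
    finally show ?thesis .
  qed
  ultimately show ?thesis
    using polar gen_doubly_stochastic_iff_row_sums[of D] by (intro exI[of _ \<theta>] exI[of _ D]) simp
qed

lemma doubly_stochastic_diag_cis_factorization:
  fixes A :: "complex^'n^'n"
  assumes norm_A: "spectral_norm A = \<sigma>" and col_sums: "\<And>k. cmod (col_sum A k) = \<sigma>"
  shows "\<exists>\<gamma> D. (\<forall>k. col_sum A k = complex_of_real \<sigma> * cis (\<gamma> k)) \<and>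
           gen_doubly_stochastic D \<and> spectral_norm D = 1 \<and> A = \<sigma> *\<^sub>R (D ** diag_cis \<gamma>)"
proof (cases "\<sigma> = 0")
  case True
  then have "A = 0"
    using norm_A spectral_norm_eq_0_iff by blast
  then show ?thesis
    using True gen_doubly_stochastic_mat_1 spectral_norm_mat_1 by (auto simp: col_sum_def)
next
  case False
  then have "0 < \<sigma>"
    using norm_A spectral_norm_nonneg[of A] by simp
  define \<gamma> where "\<gamma> k = Arg (col_sum A k)" for k
  have polar: "col_sum A k = complex_of_real \<sigma> * cis (\<gamma> k)" for k
    using rcis_cmod_Arg[of "col_sum A k"] by (simp add: \<gamma>_def rcis_def col_sums)
  define D where "D = (1 / \<sigma>) *\<^sub>R (A ** diag_cis (\<lambda>i. - \<gamma> i))"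
  have "A = \<sigma> *\<^sub>R (D ** diag_cis \<gamma>)"
    using \<open>0 < \<sigma>\<close>
    by (simp add: D_def diag_cis_uminus_mult_diag_cis flip: scalar_matrix_assoc matrix_mul_assoc)
  moreover have "spectral_norm D = 1"
    using \<open>0 < \<sigma>\<close> by (simp add: D_def spectral_norm_scaleR norm_A)
  moreover have "col_sum D k = 1" for k
  proof -
    have "col_sum D k = (1 / \<sigma>) *\<^sub>R (\<sigma> * cis (\<gamma> k) * cis (- \<gamma> k))"
      by (simp add: D_def col_sum_scaleR col_sum_mult_diag_cis polar)
    also have "\<dots> = 1"
      using \<open>0 < \<sigma>\<close> by (simp add: scaleR_conv_of_real mult.assoc cis_mult)
    finally show ?thesis .
  qed
  ultimately show ?thesis
    using polar gen_doubly_stochastic_iff_col_sums[of D] by (intro exI[of _ \<gamma>] exI[of _ D]) simp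
qed

theorem proposition2p4:
  fixes A :: "complex^'n^'n" and \<sigma> :: real
  assumes "spectral_norm A = \<sigma>"
  shows "((\<forall>k. cmod (row_sum A k) = \<sigma>) \<longleftrightarrow>
           (\<exists>\<theta> D. (\<forall>k. row_sum A k = complex_of_real \<sigma> * cis (\<theta> k)) \<and>
                  gen_doubly_stochastic D \<and> spectral_norm D = 1 \<and>
                  A = \<sigma> *\<^sub>R (diag_cis \<theta> ** D)))
       \<and> ((\<forall>k. cmod (col_sum A k) = \<sigma>) \<longleftrightarrow>
           (\<exists>\<gamma> D. (\<forall>k. col_sum A k = complex_of_real \<sigma> * cis (\<gamma> k)) \<and>
                  gen_doubly_stochastic D \<and> spectral_norm D = 1 \<and>
                  A = \<sigma> *\<^sub>R (D ** diag_cis \<gamma>)))"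
proof -
  have "0 \<le> \<sigma>"
    using assms spectral_norm_nonneg by blast
  then have cmod_polar: "cmod (complex_of_real \<sigma> * cis t) = \<sigma>" for t
    by (simp add: norm_mult)
  show ?thesis
    using diag_cis_doubly_stochastic_factorization[OF assms]
      doubly_stochastic_diag_cis_factorization[OF assms] cmod_polar
    by metis
qed

end
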